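(* Let $K$ be a compact space such that every separable continuous image of $K$ is metrizable, and such that every continuous image of $K$ has a dense metrizable subspace. Then every ccc continuous image of $K$ is metrizable. In particular, every $\aleph_0$-monolithic fragmentable compact space has all its ccc continuous images metrizable.
   Context: A space is ccc if it has no uncountable family of pairwise disjoint nonempty open sets. A space is $\aleph_0$-monolithic if each of its separable subspaces is metrizable. A compact space $K$ is fragmentable if there is a metric $d$ on $K$ such that every nonempty subset $A\subseteq K$ has, for every $\varepsilon>0$, a nonempty relatively open subset of $d$-diameter less than $\varepsilon$. *)

theory Defs
  imports "HOL-Analysis.Analysis"
begin

definition ccc_space :: "'a topology \<Rightarrow> bool" where
  "ccc_space X \<longleftrightarrow>
     (\<forall>\<F>. (\<forall>U\<in>\<F>. openin X U \<and> U \<noteq> {}) \<and> pairwise disjnt \<F> \<longrightarrow> countable \<F>)"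

definition aleph0_monolithic :: "'a topology \<Rightarrow> bool" where
  "aleph0_monolithic X \<longleftrightarrow>
     (\<forall>S. S \<subseteq> topspace X \<and> separable_space (subtopology X S)
          \<longrightarrow> metrizable_space (subtopology X S))"

text \<open>Fragmentability: a metric d on the points of K (not necessarily compatible
  with the topology) such that every nonempty subset A has, for every eps > 0, a nonempty
  relatively open subset of d-diameter less than eps.  "d-diameter less than eps" is written
  as: all d-distances within the set are bounded by some delta < eps.\<close>
definition fragmentable :: "'a topology \<Rightarrow> bool" where
  "fragmentable K \<longleftrightarrow>
     (\<exists>d. Metric_space (topspace K) d \<and>
       (\<forall>A. A \<subseteq> topspace K \<and> A \<noteq> {} \<longrightarrow>
          (\<forall>\<epsilon>>0. \<exists>U. openin K U \<and> A \<inter> U \<noteq> {} \<and>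
              (\<exists>\<delta><\<epsilon>. \<forall>x\<in>A \<inter> U. \<forall>y\<in>A \<inter> U. d x y \<le> \<delta>))))"

text \<open>Y is a continuous image of K (compact spaces are Hausdorff, so images are Hausdorff too).\<close>
definition cont_image :: "'a topology \<Rightarrow> 'b topology \<Rightarrow> bool" where
  "cont_image K Y \<longleftrightarrow> Hausdorff_space Y \<and>
     (\<exists>f. continuous_map K Y f \<and> f ` topspace K = topspace Y)"

definition compact_Hausdorff :: "'a topology \<Rightarrow> bool" where
  "compact_Hausdorff K \<longleftrightarrow> compact_space K \<and> Hausdorff_space K"

end

theory Submission
  imports Defs
begin

text \<open>
  For the first statement, a ccc continuous image Y of K is replaced by a homeomorphic copy whose
  points are the fibres of the map. By hypothesis the copy has a dense metrizable subspace D.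
  A dense subspace of a ccc space is ccc, and a ccc metrizable space is separable (for each n,
  a maximal disjoint family of open sets of diameter less than 1/(n+1) is countable), so D and
  hence Y are separable, and the first hypothesis makes Y metrizable.

  For the second statement, Zorn's lemma gives a closed L \<subseteq> K on which the map onto Y is
  irreducible, and irreducibility pulls the ccc back from Y to L. A ccc fragmentable compact
  space is separable: for each n the ccc provides countably many open sets, with closures of
  fragmenting diameter less than 1/(n+1), whose union is dense; by Baire's theorem these unions
  have a dense intersection G; at a point of G the chosen sets have closures shrinking to the
  point, so by compactness their finite intersections form a neighbourhood base there, and
  one point from each finite intersection gives a countable set whose closure contains G.
  Monolithicity now makes L metrizable, hence second countable; second countability passes to
  the perfect image Y, and a second countable compact Hausdorff space is metrizable.
\<close>

section \<open>The countable chain condition\<close>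

lemma ccc_space_countable_family:
  assumes "ccc_space X"
    and "\<And>i. i \<in> I \<Longrightarrow> openin X (U i) \<and> U i \<noteq> {}"
    and "\<And>i j. i \<in> I \<Longrightarrow> j \<in> I \<Longrightarrow> i \<noteq> j \<Longrightarrow> disjnt (U i) (U j)"
  shows "countable I"
proof -
  have "inj_on U I"
    using assms(2,3) by (metis disjnt_self_iff_empty inj_onI)
  moreover have "countable (U ` I)"
  proof -
    have "pairwise disjnt (U ` I)"
      using assms(3) unfolding pairwise_def by blast
    then show ?thesis
      using assms(1,2) unfolding ccc_space_def by blast
  qed
  ultimately show ?thesis
    using countable_image_inj_on by blast
qed

lemma ccc_space_continuous_map_image:
  assumes "ccc_space X" "continuous_map X Y f" "f ` topspace X = topspace Y"
  shows "ccc_space Y"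
  unfolding ccc_space_def
proof (intro allI impI)
  fix \<F> assume \<F>: "(\<forall>V\<in>\<F>. openin Y V \<and> V \<noteq> {}) \<and> pairwise disjnt \<F>"
  let ?U = "\<lambda>V. {x \<in> topspace X. f x \<in> V}"
  show "countable \<F>"
  proof (rule ccc_space_countable_family[OF assms(1), of \<F> ?U])
    fix V assume "V \<in> \<F>"
    then have "openin Y V" "V \<noteq> {}"
      using \<F> by auto
    moreover from this have "V \<subseteq> f ` topspace X"
      using assms(3) openin_subset by metis
    ultimately show "openin X (?U V) \<and> ?U V \<noteq> {}"
      using assms(2) openin_continuous_map_preimage by blast
  next
    fix V V' assume "V \<in> \<F>" "V' \<in> \<F>" "V \<noteq> V'"
    then have "disjnt V V'"
      using \<F> by (simp add: pairwise_def)
    then show "disjnt (?U V) (?U V')"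
      by (auto simp: disjnt_def)
  qed
qed

lemma ccc_space_dense_subtopology:
  assumes "ccc_space X" "X closure_of D = topspace X"
  shows "ccc_space (subtopology X D)"
  unfolding ccc_space_def
proof (intro allI impI)
  fix \<F> assume \<F>: "(\<forall>U\<in>\<F>. openin (subtopology X D) U \<and> U \<noteq> {}) \<and> pairwise disjnt \<F>"
  then obtain T where T: "\<And>U. U \<in> \<F> \<Longrightarrow> openin X (T U) \<and> U = T U \<inter> D"
    unfolding openin_subtopology by metis
  show "countable \<F>"
  proof (rule ccc_space_countable_family[OF assms(1), of \<F> T])
    fix U assume "U \<in> \<F>"
    then show "openin X (T U) \<and> T U \<noteq> {}"
      using T \<F> by blast
  next
    fix U V assume UV: "U \<in> \<F>" "V \<in> \<F>" "U \<noteq> V"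
    then have "disjnt U V"
      using \<F> by (simp add: pairwise_def)
    then have "D \<inter> (T U \<inter> T V) = {}"
      using T UV by (auto simp: disjnt_def)
    moreover have "openin X (T U \<inter> T V)"
      using T UV by blast
    ultimately show "disjnt (T U) (T V)"
      using assms(2) unfolding dense_intersects_open disjnt_def by blast
  qed
qed

lemma ccc_space_countable_dense_union:
  assumes ccc: "ccc_space X"
    and small: "\<And>W. openin X W \<Longrightarrow> W \<noteq> {} \<Longrightarrow> \<exists>U. openin X U \<and> U \<noteq> {} \<and> U \<subseteq> W \<and> P U"
  obtains \<U> where "countable \<U>" "\<And>U. U \<in> \<U> \<Longrightarrow> openin X U \<and> P U"
    "X closure_of \<Union>\<U> = topspace X"
proof -
  define \<A> where "\<A> = {\<U>. (\<forall>U\<in>\<U>. openin X U \<and> U \<noteq> {} \<and> P U) \<and> pairwise disjnt \<U>}"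
  have "\<Union>\<C> \<in> \<A>" if "subset.chain \<A> \<C>" for \<C>
    using that pairwise_chain_Union[of \<C> disjnt]
    unfolding \<A>_def subset_chain_def chain_subset_def by blast
  then obtain \<U> where "\<U> \<in> \<A>" and max: "\<And>\<V>. \<V> \<in> \<A> \<Longrightarrow> \<U> \<subseteq> \<V> \<Longrightarrow> \<V> = \<U>"
    using subset_Zorn' by metis
  then have \<U>: "\<And>U. U \<in> \<U> \<Longrightarrow> openin X U \<and> U \<noteq> {} \<and> P U" "pairwise disjnt \<U>"
    unfolding \<A>_def by auto
  have "X closure_of \<Union>\<U> = topspace X"
    unfolding dense_intersects_open
  proof (intro allI impI)
    fix W assume "openin X W \<and> W \<noteq> {}"
    then obtain U where U: "openin X U" "U \<noteq> {}" "U \<subseteq> W" "P U"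
      using small by blast
    show "\<Union>\<U> \<inter> W \<noteq> {}"
    proof
      assume "\<Union>\<U> \<inter> W = {}"
      then have "insert U \<U> \<in> \<A>"
        using \<U> U unfolding \<A>_def by (auto simp: pairwise_insert disjnt_def)
      then have "U \<in> \<U>"
        using max by blast
      then show False
        using U \<open>\<Union>\<U> \<inter> W = {}\<close> by blast
    qed
  qed
  moreover have "countable \<U>"
    using ccc \<U> unfolding ccc_space_def by blast
  ultimately show ?thesis
    using that \<U> by blast
qed

lemma ccc_space_countable_dense_unions:
  assumes "ccc_space X"
    and "\<And>n W. openin X W \<Longrightarrow> W \<noteq> {} \<Longrightarrow> \<exists>U. openin X U \<and> U \<noteq> {} \<and> U \<subseteq> W \<and> P n U"
  obtains \<U> where "\<And>n. countable (\<U> n)" "\<And>n U. U \<in> \<U> n \<Longrightarrow> openin X U \<and> P n U"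
    "\<And>n. X closure_of \<Union>(\<U> n) = topspace X"
proof -
  have "\<exists>\<U>. countable \<U> \<and> (\<forall>U\<in>\<U>. openin X U \<and> P n U) \<and> X closure_of \<Union>\<U> = topspace X" for n
  proof -
    obtain \<U> where "countable \<U>" "\<And>U. U \<in> \<U> \<Longrightarrow> openin X U \<and> P n U"
      "X closure_of \<Union>\<U> = topspace X"
      using ccc_space_countable_dense_union[OF assms(1) assms(2)] by blast
    then show ?thesis
      by blast
  qed
  then show ?thesis
    using that by metis
qed

section \<open>Separability\<close>

lemma countable_hitting_set:
  assumes "countable \<S>"
  obtains C where "countable C" "C \<subseteq> \<Union>\<S>" "\<And>S. S \<in> \<S> \<Longrightarrow> S \<noteq> {} \<Longrightarrow> C \<inter> S \<noteq> {}"
proof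
  let ?C = "(\<lambda>S. SOME x. x \<in> S) ` {S \<in> \<S>. S \<noteq> {}}"
  show "countable ?C"
    using assms by simp
  have "(SOME x. x \<in> S) \<in> S" if "S \<noteq> {}" for S :: "'a set"
    using that by (meson ex_in_conv someI_ex)
  then show "?C \<subseteq> \<Union>\<S>" "\<And>S. S \<in> \<S> \<Longrightarrow> S \<noteq> {} \<Longrightarrow> ?C \<inter> S \<noteq> {}"
    by blast+
qed

lemma countable_pi_base_imp_separable_space:
  assumes "countable \<V>" and base: "\<And>W. openin X W \<Longrightarrow> W \<noteq> {} \<Longrightarrow> \<exists>V\<in>\<V>. V \<noteq> {} \<and> V \<subseteq> W"
  shows "separable_space X"
proof -
  have countable: "countable {V \<in> \<V>. V \<subseteq> topspace X}"
    using assms(1) by (rule countable_subset[rotated]) blast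
  obtain C where C: "countable C" "C \<subseteq> \<Union>{V \<in> \<V>. V \<subseteq> topspace X}"
    and hit: "\<And>V. V \<in> {V \<in> \<V>. V \<subseteq> topspace X} \<Longrightarrow> V \<noteq> {} \<Longrightarrow> C \<inter> V \<noteq> {}"
    by (rule countable_hitting_set[OF countable]) blast
  have "C \<inter> W \<noteq> {}" if W: "openin X W" "W \<noteq> {}" for W
  proof -
    obtain V where "V \<in> \<V>" "V \<noteq> {}" "V \<subseteq> W"
      using base W by blast
    moreover have "W \<subseteq> topspace X"
      using W(1) by (rule openin_subset)
    ultimately show ?thesis
      using hit[of V] by blast
  qed
  then have "X closure_of C = topspace X"
    unfolding dense_intersects_open by blast
  moreover have "C \<subseteq> topspace X"
    using C(2) by blast
  ultimately show ?thesis
    unfolding separable_space_def using C(1) by blast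
qed

lemma (in Metric_space) openin_contains_small_open:
  assumes "openin mtopology W" "W \<noteq> {}" "r > 0"
  shows "\<exists>U. openin mtopology U \<and> U \<noteq> {} \<and> U \<subseteq> W \<and> (\<forall>a\<in>U. \<forall>b\<in>U. d a b < r)"
proof -
  obtain p s where "p \<in> M" "s > 0" "mball p s \<subseteq> W"
    using assms(1,2) unfolding openin_mtopology by blast
  then have "mball p (min s (r/2)) \<subseteq> W" "p \<in> mball p (min s (r/2))"
    using \<open>r > 0\<close> by auto
  moreover have "d a b < r" if "a \<in> mball p (min s (r/2))" "b \<in> mball p (min s (r/2))" for a b
    using that triangle''[of a p b] by auto
  ultimately show ?thesis
    by (metis empty_iff openin_mball)
qed

lemma (in Metric_space) small_dense_families_pi_base:
  assumes small: "\<And>n U. U \<in> \<U> n \<Longrightarrow> openin mtopology U \<and> (\<forall>a\<in>U. \<forall>b\<in>U. d a b < inverse (Suc n))"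
    and dense: "\<And>n. mtopology closure_of \<Union>(\<U> n) = M"
    and "openin mtopology W" "W \<noteq> {}"
  shows "\<exists>U\<in>(\<Union>n. \<U> n). U \<noteq> {} \<and> U \<subseteq> W"
proof -
  obtain p s where p: "p \<in> M" "s > 0" "mball p s \<subseteq> W"
    using assms(3,4) unfolding openin_mtopology by blast
  obtain n where n: "inverse (Suc n) < s/2"
    using reals_Archimedean \<open>s > 0\<close> half_gt_zero by blast
  have "openin mtopology (mball p (s/2))" "p \<in> mball p (s/2)"
    using p by auto
  moreover have "mtopology closure_of \<Union>(\<U> n) = topspace mtopology"
    using dense by simp
  ultimately have "\<Union>(\<U> n) \<inter> mball p (s/2) \<noteq> {}"
    unfolding dense_intersects_open by blast
  then obtain U q where U: "U \<in> \<U> n" "q \<in> U" "q \<in> mball p (s/2)"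
    by blast
  have "U \<subseteq> M"
    using openin_subset[of mtopology U] small[OF U(1)] by simp
  have "a \<in> mball p s" if "a \<in> U" for a
  proof -
    have "d p a \<le> d p q + d q a"
      using p(1) U(2) that \<open>U \<subseteq> M\<close> triangle by blast
    also have "\<dots> < s"
      using U that n small[OF U(1)] by fastforce
    finally show ?thesis
      using p(1) that \<open>U \<subseteq> M\<close> by auto
  qed
  then show ?thesis
    using U p(3) by blast
qed

lemma ccc_metrizable_imp_separable_space:
  assumes "metrizable_space X" "ccc_space X"
  shows "separable_space X"
proof -
  obtain M d where "Metric_space M d" and X: "X = Metric_space.mtopology M d"
    using assms(1) unfolding metrizable_space_def by blast
  interpret Metric_space M d by fact
  obtain \<U> where \<U>: "\<And>n. countable (\<U> n)"
    "\<And>n U. U \<in> \<U> n \<Longrightarrow> openin X U \<and> (\<forall>a\<in>U. \<forall>b\<in>U. d a b < inverse (Suc n))"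
    "\<And>n. X closure_of \<Union>(\<U> n) = topspace X"
    using ccc_space_countable_dense_unions[OF assms(2), where P = "\<lambda>n U. \<forall>a\<in>U. \<forall>b\<in>U. d a b < inverse (Suc n)"]
      openin_contains_small_open unfolding X by auto
  have "countable (\<Union>n. \<U> n)"
    using \<U>(1) by blast
  then show ?thesis
    using countable_pi_base_imp_separable_space small_dense_families_pi_base \<U>(2,3) unfolding X
    by (metis topspace_mtopology)
qed

lemma separable_space_dense_subtopology:
  assumes "separable_space (subtopology X D)" "X closure_of D = topspace X"
  shows "separable_space X"
proof -
  obtain C where C: "countable C" "C \<subseteq> topspace X \<inter> D"
    and dense: "subtopology X D closure_of C = topspace X \<inter> D"
    using assms(1) unfolding separable_space_def by auto
  have "topspace X \<inter> D \<subseteq> X closure_of C"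
    using dense C(2) by (metis closure_of_subtopology inf.absorb_iff2 inf.cobounded2 le_infE)
  then have "X closure_of (topspace X \<inter> D) \<subseteq> X closure_of C"
    by (metis closure_of_closure_of closure_of_mono)
  then have "X closure_of C = topspace X"
    using assms(2) closure_of_restrict closure_of_subset_topspace by (metis subset_antisym)
  then show ?thesis
    unfolding separable_space_def using C by blast
qed

lemma ccc_dense_metrizable_imp_separable_space:
  assumes "ccc_space X" "X closure_of D = topspace X" "metrizable_space (subtopology X D)"
  shows "separable_space X"
  using assms ccc_space_dense_subtopology ccc_metrizable_imp_separable_space
    separable_space_dense_subtopology by blast

section \<open>Images with a dense metrizable subspace\<close>

lemma homeomorphic_space_injective_copy:
  assumes "inj_on g (topspace Y)"
  shows "Y homeomorphic_space pullback_topology (g ` topspace Y) (inv_into (topspace Y) g) Y"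
proof -
  let ?h = "inv_into (topspace Y) g"
  let ?Y' = "pullback_topology (g ` topspace Y) ?h Y"
  have hg: "?h (g y) = y" if "y \<in> topspace Y" for y
    using assms that by simp
  have "homeomorphic_maps Y ?Y' g ?h"
    unfolding homeomorphic_maps_def
  proof (intro conjI ballI)
    have "continuous_map Y Y (?h \<circ> g)"
      by (rule continuous_map_eq[OF continuous_map_id]) (simp add: hg)
    then show "continuous_map Y ?Y' g"
      by (rule continuous_map_pullback') blast
    show "continuous_map ?Y' Y ?h"
      using continuous_map_pullback[OF continuous_map_id] by simp
    show "?h (g y) = y" if "y \<in> topspace Y" for y
      using hg that .
    show "g (?h z) = z" if "z \<in> topspace ?Y'" for z
      using that by (auto simp: topspace_pullback_topology f_inv_into_f)
  qed
  then show ?thesis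
    using homeomorphic_maps_imp_homeomorphic_space by blast
qed

text \<open>The hypotheses of the theorem only concern images whose points are sets of points of K;
  replacing each point of an image by its fibre produces such an image.\<close>

lemma cont_image_homeomorphic_copy_on_fibres:
  fixes K :: "'a topology" and Y :: "'b topology"
  assumes "cont_image K Y"
  obtains Y' :: "'a set topology" where "cont_image K Y'" "Y homeomorphic_space Y'"
proof -
  obtain f where f: "continuous_map K Y f" "f ` topspace K = topspace Y"
    and "Hausdorff_space Y"
    using assms unfolding cont_image_def by blast
  define g where "g y = {x \<in> topspace K. f x = y}" for y
  define Y' where "Y' = pullback_topology (g ` topspace Y) (inv_into (topspace Y) g) Y"
  have "inj_on g (topspace Y)"
  proof (rule inj_onI)
    fix y y' assume "y \<in> topspace Y" "g y = g y'"
    then obtain x where "x \<in> topspace K" "f x = y"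
      using f(2) by (metis imageE)
    then have "x \<in> g y'"
      unfolding \<open>g y = g y'\<close>[symmetric] by (simp add: g_def)
    then show "y = y'"
      using \<open>f x = y\<close> by (simp add: g_def)
  qed
  then have "Y homeomorphic_space Y'"
    unfolding Y'_def by (rule homeomorphic_space_injective_copy)
  then obtain \<phi> where \<phi>: "homeomorphic_map Y Y' \<phi>"
    unfolding homeomorphic_space by blast
  have "Hausdorff_space Y'"
    using homeomorphic_Hausdorff_space \<open>Y homeomorphic_space Y'\<close> \<open>Hausdorff_space Y\<close> by blast
  moreover have "continuous_map K Y' (\<phi> \<circ> f)"
    using continuous_map_compose[OF f(1) homeomorphic_imp_continuous_map[OF \<phi>]] .
  moreover have "(\<phi> \<circ> f) ` topspace K = topspace Y'"
    using f(2) homeomorphic_imp_surjective_map[OF \<phi>] by (metis image_comp)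
  ultimately have "cont_image K Y'"
    unfolding cont_image_def by blast
  then show ?thesis
    using that \<open>Y homeomorphic_space Y'\<close> by blast
qed

lemma ccc_cont_image_metrizable_of_dense_metrizable:
  fixes K :: "'a topology" and Y :: "'b topology"
  assumes separable_metrizable: "\<And>Y' :: 'a set topology. cont_image K Y' \<Longrightarrow> separable_space Y'
              \<Longrightarrow> metrizable_space Y'"
    and dense_metrizable: "\<And>Y' :: 'a set topology. cont_image K Y' \<Longrightarrow>
              \<exists>D. D \<subseteq> topspace Y' \<and> Y' closure_of D = topspace Y' \<and> metrizable_space (subtopology Y' D)"
    and "cont_image K Y" "ccc_space Y"
  shows "metrizable_space Y"
proof -
  obtain Y' :: "'a set topology" where Y': "cont_image K Y'" "Y homeomorphic_space Y'"
    using cont_image_homeomorphic_copy_on_fibres assms(3) by blast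
  then have "ccc_space Y'"
    using \<open>ccc_space Y\<close> ccc_space_continuous_map_image
    by (metis homeomorphic_imp_continuous_map homeomorphic_imp_surjective_map homeomorphic_space)
  moreover obtain D where "Y' closure_of D = topspace Y'" "metrizable_space (subtopology Y' D)"
    using dense_metrizable Y'(1) by blast
  ultimately have "separable_space Y'"
    by (rule ccc_dense_metrizable_imp_separable_space)
  then show ?thesis
    using separable_metrizable Y' homeomorphic_metrizable_space by blast
qed

section \<open>Irreducible maps\<close>

definition irreducible_map :: "'a topology \<Rightarrow> 'b topology \<Rightarrow> ('a \<Rightarrow> 'b) \<Rightarrow> bool" where
  "irreducible_map X Y f \<longleftrightarrow>
     f ` topspace X = topspace Y \<and> (\<forall>C. closedin X C \<and> f ` C = topspace Y \<longrightarrow> C = topspace X)"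

lemma image_diff_Union_open_chain:
  assumes surj: "f ` topspace X = topspace Y"
    and fibres: "\<And>y. y \<in> topspace Y \<Longrightarrow> compactin X {x \<in> topspace X. f x = y}"
    and "chain\<^sub>\<subseteq> \<C>" "\<And>U. U \<in> \<C> \<Longrightarrow> openin X U"
    and onto: "\<And>U. U \<in> \<C> \<Longrightarrow> f ` (topspace X - U) = topspace Y"
  shows "f ` (topspace X - \<Union>\<C>) = topspace Y"
proof
  show "f ` (topspace X - \<Union>\<C>) \<subseteq> topspace Y"
    using surj by blast
  show "topspace Y \<subseteq> f ` (topspace X - \<Union>\<C>)"
  proof
    fix y assume y: "y \<in> topspace Y"
    show "y \<in> f ` (topspace X - \<Union>\<C>)"
    proof (rule ccontr)
      assume "y \<notin> f ` (topspace X - \<Union>\<C>)"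
      then have "{x \<in> topspace X. f x = y} \<subseteq> \<Union>\<C>"
        by blast
      then have "\<exists>\<F>. finite \<F> \<and> \<F> \<subseteq> \<C> \<and> {x \<in> topspace X. f x = y} \<subseteq> \<Union>\<F>"
        using fibres[OF y] assms(4) unfolding compactin_def by blast
      then obtain \<F> where \<F>: "finite \<F>" "\<F> \<subseteq> \<C>" "{x \<in> topspace X. f x = y} \<subseteq> \<Union>\<F>"
        by blast
      have "\<F> \<noteq> {}"
        using y surj \<F>(3) by force
      moreover have "subset.chain \<C> \<F>"
        using \<open>chain\<^sub>\<subseteq> \<C>\<close> \<F>(2) by (auto simp: subset_chain_def chain_subset_def)
      ultimately have "\<Union>\<F> \<in> \<C>"
        using Union_in_chain[OF \<F>(1)] \<F>(2) by blast
      then have "y \<in> f ` (topspace X - \<Union>\<F>)"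
        using y onto by blast
      then show False
        using \<F>(3) by auto
    qed
  qed
qed

lemma irreducible_restriction_exists:
  assumes surj: "f ` topspace X = topspace Y"
    and fibres: "\<And>y. y \<in> topspace Y \<Longrightarrow> compactin X {x \<in> topspace X. f x = y}"
  obtains L where "closedin X L" "irreducible_map (subtopology X L) Y f"
proof -
  define \<A> where "\<A> = {U. openin X U \<and> f ` (topspace X - U) = topspace Y}"
  have "\<Union>\<C> \<in> \<A>" if "subset.chain \<A> \<C>" for \<C>
  proof -
    have "chain\<^sub>\<subseteq> \<C>" "\<And>U. U \<in> \<C> \<Longrightarrow> openin X U"
      "\<And>U. U \<in> \<C> \<Longrightarrow> f ` (topspace X - U) = topspace Y"
      using that by (auto simp: subset_chain_def chain_subset_def \<A>_def)
    then show ?thesis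
      using image_diff_Union_open_chain[OF surj fibres] unfolding \<A>_def by blast
  qed
  then obtain M where M: "M \<in> \<A>" and max: "\<And>U. U \<in> \<A> \<Longrightarrow> M \<subseteq> U \<Longrightarrow> U = M"
    using subset_Zorn' by metis
  define L where "L = topspace X - M"
  have L: "topspace (subtopology X L) = L"
    by (auto simp: L_def)
  have "closedin X L"
    using M unfolding L_def \<A>_def by (simp add: closedin_diff)
  moreover have "irreducible_map (subtopology X L) Y f"
    unfolding irreducible_map_def L
  proof (intro conjI allI impI)
    show "f ` L = topspace Y"
      using M by (simp add: L_def \<A>_def)
    fix C assume C: "closedin (subtopology X L) C \<and> f ` C = topspace Y"
    then have "closedin X C" "C \<subseteq> L"
      using closedin_closed_subtopology[OF \<open>closedin X L\<close>] by blast+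
    then have "topspace X - (topspace X - C) = C"
      using closedin_subset by blast
    then have "topspace X - C \<in> \<A>"
      using C \<open>closedin X C\<close> by (simp add: \<A>_def openin_diff)
    moreover have "M \<subseteq> topspace X - C"
      using M \<open>C \<subseteq> L\<close> openin_subset unfolding L_def \<A>_def by blast
    ultimately have "topspace X - C = M"
      by (rule max)
    then show "C = L"
      using \<open>topspace X - (topspace X - C) = C\<close> by (simp add: L_def)
  qed
  ultimately show ?thesis
    using that by blast
qed

lemma ccc_space_irreducible_preimage:
  assumes "closed_map X Y f" "irreducible_map X Y f" "ccc_space Y"
  shows "ccc_space X"
  unfolding ccc_space_def
proof (intro allI impI)
  fix \<F> assume \<F>: "(\<forall>U\<in>\<F>. openin X U \<and> U \<noteq> {}) \<and> pairwise disjnt \<F>"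
  have surj: "f ` topspace X = topspace Y"
    using assms(2) unfolding irreducible_map_def by blast
  \<comment> \<open>the points whose fibre lies in U; irreducibility makes this open set nonempty\<close>
  let ?V = "\<lambda>U. topspace Y - f ` (topspace X - U)"
  show "countable \<F>"
  proof (rule ccc_space_countable_family[OF assms(3), of \<F> ?V])
    fix U assume "U \<in> \<F>"
    then have U: "openin X U" "U \<noteq> {}"
      using \<F> by auto
    then have "closedin X (topspace X - U)"
      by blast
    then have "openin Y (?V U)"
      using assms(1) unfolding closed_map_def by blast
    moreover have "?V U \<noteq> {}"
    proof
      assume "?V U = {}"
      then have "f ` (topspace X - U) = topspace Y"
        using surj by blast
      then have "topspace X - U = topspace X"
        using assms(2) \<open>closedin X (topspace X - U)\<close> unfolding irreducible_map_def by blast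
      then show False
        using U openin_subset by blast
    qed
    ultimately show "openin Y (?V U) \<and> ?V U \<noteq> {}"
      by blast
  next
    fix U U' assume "U \<in> \<F>" "U' \<in> \<F>" "U \<noteq> U'"
    then have "disjnt U U'"
      using \<F> by (simp add: pairwise_def)
    show "disjnt (?V U) (?V U')"
      unfolding disjnt_def
    proof (rule equals0I)
      fix y assume y: "y \<in> ?V U \<inter> ?V U'"
      then have "y \<in> topspace Y"
        by blast
      then obtain x where "x \<in> topspace X" "f x = y"
        using surj by (metis imageE)
      then have "x \<in> U" "x \<in> U'"
        using y by blast+
      then show False
        using \<open>disjnt U U'\<close> by (simp add: disjnt_def disjoint_iff)
    qed
  qed
qed

section \<open>Fragmentable compact spaces\<close>

lemma regular_space_closure_of_subset:
  assumes "regular_space X" "openin X W" "x \<in> W"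
  obtains U where "openin X U" "x \<in> U" "X closure_of U \<subseteq> W"
proof -
  obtain U V where "openin X U" "closedin X V" "x \<in> U" "U \<subseteq> V" "V \<subseteq> W"
    using assms neighbourhood_base_of_closedin[of X] unfolding neighbourhood_base_of by metis
  then show ?thesis
    using that closure_of_minimal by (metis subset_trans)
qed

lemma compact_space_finite_Inter_subset_open:
  assumes "compact_space X" "openin X W" "\<And>i. closedin X (C i)" "topspace X \<inter> (\<Inter>i. C i) \<subseteq> W"
  obtains N where "finite N" "topspace X \<inter> (\<Inter>i\<in>N. C i) \<subseteq> W"
proof -
  let ?\<U> = "range (\<lambda>i. topspace X - C i)"
  have "compactin X (topspace X - W)"
    using assms(1,2) closedin_compact_space by blast
  moreover have "topspace X - W \<subseteq> \<Union>?\<U>"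
    using assms(4) by blast
  moreover have "\<forall>U\<in>?\<U>. openin X U"
    using assms(3) by blast
  ultimately have "\<exists>\<F>. finite \<F> \<and> \<F> \<subseteq> ?\<U> \<and> topspace X - W \<subseteq> \<Union>\<F>"
    unfolding compactin_def by blast
  then obtain N where "finite N" "topspace X - W \<subseteq> (\<Union>i\<in>N. topspace X - C i)"
    by (metis finite_subset_image)
  then show ?thesis
    using that by blast
qed

lemma compact_space_in_closure_of_hitting_set:
  assumes "compact_space X" "x \<in> topspace X"
    and "\<And>n. openin X (U n)" "\<And>n. x \<in> U n" "topspace X \<inter> (\<Inter>n. X closure_of U n) \<subseteq> {x}"
    and hit: "\<And>N. finite N \<Longrightarrow> C \<inter> topspace X \<inter> (\<Inter>n\<in>N. U n) \<noteq> {}"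
  shows "x \<in> X closure_of C"
  unfolding in_closure_of
proof (intro conjI allI impI)
  show "x \<in> topspace X"
    by fact
  fix W assume W: "x \<in> W \<and> openin X W"
  then have "openin X W" "topspace X \<inter> (\<Inter>n. X closure_of U n) \<subseteq> W"
    using assms(5) by blast+
  then obtain N where N: "finite N" "topspace X \<inter> (\<Inter>n\<in>N. X closure_of U n) \<subseteq> W"
    using compact_space_finite_Inter_subset_open[OF assms(1) _ closedin_closure_of] by blast
  have "topspace X \<inter> U n \<subseteq> X closure_of U n" for n
    by (rule closure_of_subset_Int)
  then have "topspace X \<inter> (\<Inter>n\<in>N. U n) \<subseteq> W"
    using N(2) by blast
  then show "\<exists>y. y \<in> C \<and> y \<in> W"
    using hit[OF N(1)] by blast
qed

lemma fragmentableE: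
  assumes "fragmentable X"
  obtains d where "Metric_space (topspace X) d"
    "\<And>A \<epsilon>. A \<subseteq> topspace X \<Longrightarrow> A \<noteq> {} \<Longrightarrow> \<epsilon> > 0 \<Longrightarrow>
       \<exists>U. openin X U \<and> A \<inter> U \<noteq> {} \<and> (\<exists>\<delta><\<epsilon>. \<forall>x\<in>A \<inter> U. \<forall>y\<in>A \<inter> U. d x y \<le> \<delta>)"
  using assms unfolding fragmentable_def by meson

lemma fragmentable_subtopology:
  assumes "fragmentable X"
  shows "fragmentable (subtopology X L)"
proof -
  obtain d where d: "Metric_space (topspace X) d"
    and frag: "\<And>A \<epsilon>. A \<subseteq> topspace X \<Longrightarrow> A \<noteq> {} \<Longrightarrow> \<epsilon> > 0 \<Longrightarrow>
       \<exists>U. openin X U \<and> A \<inter> U \<noteq> {} \<and> (\<exists>\<delta><\<epsilon>. \<forall>x\<in>A \<inter> U. \<forall>y\<in>A \<inter> U. d x y \<le> \<delta>)"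
    using fragmentableE[OF assms] by metis
  have "Metric_space (topspace (subtopology X L)) d"
    using Metric_space.subspace[OF d] by simp
  moreover have "\<exists>U. openin (subtopology X L) U \<and> A \<inter> U \<noteq> {} \<and>
      (\<exists>\<delta><\<epsilon>. \<forall>x\<in>A \<inter> U. \<forall>y\<in>A \<inter> U. d x y \<le> \<delta>)"
    if A: "A \<subseteq> topspace (subtopology X L)" "A \<noteq> {}" and "\<epsilon> > 0" for A \<epsilon>
  proof -
    obtain U \<delta> where "openin X U" "A \<inter> U \<noteq> {}" "\<delta> < \<epsilon>" "\<forall>x\<in>A \<inter> U. \<forall>y\<in>A \<inter> U. d x y \<le> \<delta>"
      using frag[of A \<epsilon>] A \<open>\<epsilon> > 0\<close> by auto
    moreover have "openin (subtopology X L) (L \<inter> U)" "A \<inter> (L \<inter> U) = A \<inter> U"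
      using \<open>openin X U\<close> A(1) by (auto simp: openin_subtopology_Int2)
    ultimately show ?thesis
      by metis
  qed
  ultimately show ?thesis
    unfolding fragmentable_def by blast
qed

lemma fragmentable_regular_small_closures:
  assumes "fragmentable X" "regular_space X"
  obtains d where "Metric_space (topspace X) d"
    "\<And>W \<epsilon>. openin X W \<Longrightarrow> W \<noteq> {} \<Longrightarrow> \<epsilon> > 0 \<Longrightarrow>
       \<exists>U. openin X U \<and> U \<noteq> {} \<and> U \<subseteq> W \<and> (\<forall>a\<in>X closure_of U. \<forall>b\<in>X closure_of U. d a b < \<epsilon>)"
proof -
  obtain d where d: "Metric_space (topspace X) d"
    and frag: "\<And>A \<epsilon>. A \<subseteq> topspace X \<Longrightarrow> A \<noteq> {} \<Longrightarrow> \<epsilon> > 0 \<Longrightarrow>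
       \<exists>U. openin X U \<and> A \<inter> U \<noteq> {} \<and> (\<exists>\<delta><\<epsilon>. \<forall>x\<in>A \<inter> U. \<forall>y\<in>A \<inter> U. d x y \<le> \<delta>)"
    using fragmentableE[OF assms(1)] by metis
  have "\<exists>U. openin X U \<and> U \<noteq> {} \<and> U \<subseteq> W \<and> (\<forall>a\<in>X closure_of U. \<forall>b\<in>X closure_of U. d a b < \<epsilon>)"
    if W: "openin X W" "W \<noteq> {}" and "\<epsilon> > 0" for W \<epsilon>
  proof -
    obtain V \<delta> where V: "openin X V" "W \<inter> V \<noteq> {}" "\<delta> < \<epsilon>" "\<forall>a\<in>W \<inter> V. \<forall>b\<in>W \<inter> V. d a b \<le> \<delta>"
      using frag[of W \<epsilon>] W openin_subset \<open>\<epsilon> > 0\<close> by metis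
    then obtain p where "p \<in> W \<inter> V"
      by blast
    moreover have "openin X (W \<inter> V)"
      using W(1) V(1) by blast
    ultimately obtain U where U: "openin X U" "p \<in> U" "X closure_of U \<subseteq> W \<inter> V"
      using regular_space_closure_of_subset[OF assms(2)] by metis
    moreover have "U \<subseteq> W"
      using U closure_of_subset[OF openin_subset[OF U(1)]] by blast
    moreover have "d a b < \<epsilon>" if "a \<in> X closure_of U" "b \<in> X closure_of U" for a b
    proof -
      have "d a b \<le> \<delta>"
        using that U(3) V(4) by blast
      then show ?thesis
        using V(3) by linarith
    qed
    ultimately show ?thesis
      by blast
  qed
  then show ?thesis
    using that[OF d] by blast
qed

lemma Inter_closures_of_shrinking_subset_singleton:
  assumes "Metric_space (topspace X) d" "x \<in> topspace X" "\<And>n. x \<in> U n"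
    and small: "\<And>n a b. a \<in> X closure_of U n \<Longrightarrow> b \<in> X closure_of U n \<Longrightarrow> d a b < inverse (Suc n)"
  shows "topspace X \<inter> (\<Inter>n. X closure_of U n) \<subseteq> {x}"
proof
  fix y assume y: "y \<in> topspace X \<inter> (\<Inter>n. X closure_of U n)"
  have "x \<in> X closure_of U n" for n
    using assms(2,3) closure_of_subset_Int[of X "U n"] by blast
  then have less: "d x y < inverse (Suc n)" for n
    using small[of x n y] y by blast
  have "d x y = 0"
  proof (rule ccontr)
    assume "d x y \<noteq> 0"
    then have "d x y > 0"
      using Metric_space.nonneg[OF assms(1), of x y] by linarith
    then obtain n where "inverse (Suc n) < d x y"
      using reals_Archimedean by blast
    then show False
      using less[of n] by linarith
  qed
  then show "y \<in> {x}"
    using Metric_space.zero[OF assms(1)] assms(2) y by auto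
qed

lemma compact_space_Inter_shrinking_in_closure_of_countable:
  assumes "compact_space X" "Metric_space (topspace X) d" "\<And>n. countable (\<U> n)"
    and \<U>: "\<And>n U. U \<in> \<U> n \<Longrightarrow>
              openin X U \<and> (\<forall>a\<in>X closure_of U. \<forall>b\<in>X closure_of U. d a b < inverse (Suc n))"
  obtains C where "countable C" "C \<subseteq> topspace X" "(\<Inter>n. \<Union>(\<U> n)) \<subseteq> X closure_of C"
proof -
  define \<S> where "\<S> = (\<lambda>\<F>. topspace X \<inter> \<Inter>\<F>) ` {\<F>. finite \<F> \<and> \<F> \<subseteq> (\<Union>n. \<U> n)}"
  have "countable \<S>"
    unfolding \<S>_def using assms(3) by (intro countable_image countable_Collect_finite_subset countable_UN) auto
  then obtain C where C: "countable C" "C \<subseteq> \<Union>\<S>" and hit: "\<And>S. S \<in> \<S> \<Longrightarrow> S \<noteq> {} \<Longrightarrow> C \<inter> S \<noteq> {}"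
    using countable_hitting_set by blast
  have in_closure: "x \<in> X closure_of C" if "x \<in> (\<Inter>n. \<Union>(\<U> n))" for x
  proof -
    have "\<forall>n. \<exists>U\<in>\<U> n. x \<in> U"
      using that by blast
    then obtain U where U: "\<And>n. U n \<in> \<U> n" "\<And>n. x \<in> U n"
      by metis
    have "openin X (U n)" for n
      using \<U>[OF U(1)] by blast
    then have x: "x \<in> topspace X"
      using U(2) openin_subset by blast
    have "d a b < inverse (Suc n)" if "a \<in> X closure_of U n" "b \<in> X closure_of U n" for n a b
      using \<U>[OF U(1)] that by blast
    then have shrink: "topspace X \<inter> (\<Inter>n. X closure_of U n) \<subseteq> {x}"
      by (rule Inter_closures_of_shrinking_subset_singleton[OF assms(2) x U(2)])
    have "C \<inter> topspace X \<inter> (\<Inter>n\<in>N. U n) \<noteq> {}" if "finite N" for N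
    proof -
      have "topspace X \<inter> \<Inter>(U ` N) \<in> \<S>"
        unfolding \<S>_def using that U(1) by (intro image_eqI[where x = "U ` N"]) auto
      moreover have "x \<in> topspace X \<inter> \<Inter>(U ` N)"
        using U(2) x by blast
      ultimately show ?thesis
        using hit by (metis Int_assoc empty_iff)
    qed
    then show "x \<in> X closure_of C"
      by (rule compact_space_in_closure_of_hitting_set[OF assms(1) x \<open>\<And>n. openin X (U n)\<close> U(2) shrink])
  qed
  have "\<Union>\<S> \<subseteq> topspace X"
    unfolding \<S>_def by auto
  show ?thesis
  proof (rule that)
    show "countable C" "C \<subseteq> topspace X"
      using C \<open>\<Union>\<S> \<subseteq> topspace X\<close> by auto
    show "(\<Inter>n. \<Union>(\<U> n)) \<subseteq> X closure_of C"
      using in_closure by blast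
  qed
qed

lemma fragmentable_ccc_imp_separable_space:
  assumes "compact_space X" "Hausdorff_space X" "ccc_space X" "fragmentable X"
  shows "separable_space X"
proof -
  have reg: "regular_space X"
    using assms(1,2) by (rule compact_Hausdorff_imp_regular_space)
  obtain d where d: "Metric_space (topspace X) d"
    and small: "\<And>W \<epsilon>. openin X W \<Longrightarrow> W \<noteq> {} \<Longrightarrow> \<epsilon> > 0 \<Longrightarrow> \<exists>U. openin X U \<and> U \<noteq> {} \<and> U \<subseteq> W
                  \<and> (\<forall>a\<in>X closure_of U. \<forall>b\<in>X closure_of U. d a b < \<epsilon>)"
    using fragmentable_regular_small_closures[OF assms(4) reg] by metis
  have small_n: "\<exists>U. openin X U \<and> U \<noteq> {} \<and> U \<subseteq> W
                  \<and> (\<forall>a\<in>X closure_of U. \<forall>b\<in>X closure_of U. d a b < inverse (Suc n))"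
    if "openin X W" "W \<noteq> {}" for n W
    using small[OF that] by simp
  obtain \<U> where \<U>: "\<And>n. countable (\<U> n)"
    "\<And>n U. U \<in> \<U> n \<Longrightarrow> openin X U \<and> (\<forall>a\<in>X closure_of U. \<forall>b\<in>X closure_of U. d a b < inverse (Suc n))"
    "\<And>n. X closure_of \<Union>(\<U> n) = topspace X"
    using ccc_space_countable_dense_unions[OF assms(3), where P =
        "\<lambda>n U. \<forall>a\<in>X closure_of U. \<forall>b\<in>X closure_of U. d a b < inverse (Suc n)"] small_n
    by blast
  obtain C where C: "countable C" "C \<subseteq> topspace X" "(\<Inter>n. \<Union>(\<U> n)) \<subseteq> X closure_of C"
    by (rule compact_space_Inter_shrinking_in_closure_of_countable[OF assms(1) d \<U>(1,2)]) blast
  have "X closure_of (\<Inter>n. \<Union>(\<U> n)) = topspace X"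
  proof (rule Baire_category)
    show "completely_metrizable_space X \<or> locally_compact_space X \<and> regular_space X"
      using assms(1) reg compact_imp_locally_compact_space by blast
    show "openin X T \<and> X closure_of T = topspace X" if "T \<in> range (\<lambda>n. \<Union>(\<U> n))" for T
      using that \<U>(2,3) by auto
  qed simp
  moreover have "X closure_of (\<Inter>n. \<Union>(\<U> n)) \<subseteq> X closure_of C"
    using closure_of_mono[OF C(3), of X] by simp
  ultimately have "X closure_of C = topspace X"
    by (simp add: closure_of_subset_topspace subset_antisym)
  then show ?thesis
    unfolding separable_space_def using C(1,2) by blast
qed

section \<open>Metrizability of compact spaces\<close>

lemma compact_metrizable_imp_second_countable:
  assumes "compact_space X" "metrizable_space X"
  shows "second_countable X"
proof -
  obtain M d where "Metric_space M d" and X: "X = Metric_space.mtopology M d"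
    using assms(2) unfolding metrizable_space_def by blast
  interpret Metric_space M d by fact
  have "mtotally_bounded M"
    using assms(1) unfolding X compact_space_eq_mcomplete_mtotally_bounded by blast
  then have "\<exists>K. finite K \<and> K \<subseteq> M \<and> M \<subseteq> (\<Union>c\<in>K. mball c (inverse (Suc n)))" for n
    unfolding mtotally_bounded_def by simp
  then obtain K where K: "\<And>n. finite (K n)" "\<And>n. K n \<subseteq> M"
    "\<And>n. M \<subseteq> (\<Union>c\<in>K n. mball c (inverse (Suc n)))"
    by metis
  define \<B> where "\<B> = (\<Union>n. (\<lambda>c. mball c (inverse (Suc n))) ` K n)"
  have "countable \<B>"
    unfolding \<B>_def using K(1) by (simp add: countable_finite)
  moreover have "\<forall>V\<in>\<B>. openin X V"
    unfolding \<B>_def X by blast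
  moreover have "\<exists>V\<in>\<B>. x \<in> V \<and> V \<subseteq> U" if U: "openin X U" "x \<in> U" for U x
  proof -
    obtain r where "r > 0" "mball x r \<subseteq> U" "x \<in> M"
      using U unfolding X openin_mtopology by blast
    obtain n where n: "inverse (Suc n) < r/2"
      using reals_Archimedean \<open>r > 0\<close> half_gt_zero by blast
    obtain c where c: "c \<in> K n" "x \<in> mball c (inverse (Suc n))"
      using K(3)[of n] \<open>x \<in> M\<close> by blast
    have "mball c (inverse (Suc n)) \<subseteq> mball x r"
    proof
      fix y assume y: "y \<in> mball c (inverse (Suc n))"
      then have "d x y \<le> d c x + d c y"
        using c triangle'' by simp
      also have "\<dots> < r"
        using c y n by simp
      finally show "y \<in> mball x r"
        using y \<open>x \<in> M\<close> by simp
    qed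
    then show ?thesis
      unfolding \<B>_def using c \<open>mball x r \<subseteq> U\<close> by blast
  qed
  ultimately show ?thesis
    unfolding second_countable_def by blast
qed

lemma second_countable_perfect_map_image:
  assumes "perfect_map X Y f" "second_countable X"
  shows "second_countable Y"
proof -
  obtain \<B> where \<B>: "countable \<B>" "\<And>V. V \<in> \<B> \<Longrightarrow> openin X V"
    "\<And>U x. openin X U \<Longrightarrow> x \<in> U \<Longrightarrow> \<exists>V\<in>\<B>. x \<in> V \<and> V \<subseteq> U"
    using assms(2) unfolding second_countable_def by metis
  have f: "continuous_map X Y f" "closed_map X Y f" "f ` topspace X = topspace Y"
    and fibres: "\<And>y. y \<in> topspace Y \<Longrightarrow> compactin X {x \<in> topspace X. f x = y}"
    using assms(1) unfolding perfect_map_def proper_map_def by auto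
  \<comment> \<open>the points whose fibre lies in U\<close>
  define w where "w U = topspace Y - f ` (topspace X - U)" for U
  let ?\<C> = "(\<lambda>\<F>. w (\<Union>\<F>)) ` {\<F>. finite \<F> \<and> \<F> \<subseteq> \<B>}"
  have "countable ?\<C>"
    using \<B>(1) by (simp add: countable_Collect_finite_subset)
  moreover have "openin Y (w U)" if "openin X U" for U
    using f(2) that unfolding closed_map_def w_def by blast
  then have "\<forall>V\<in>?\<C>. openin Y V"
    using \<B>(2) by blast
  moreover have "\<exists>V\<in>?\<C>. y \<in> V \<and> V \<subseteq> W" if W: "openin Y W" "y \<in> W" for W y
  proof -
    let ?P = "{x \<in> topspace X. f x \<in> W}"
    have "openin X ?P"
      using f(1) W(1) by (rule openin_continuous_map_preimage)
    then have "{x \<in> topspace X. f x = y} \<subseteq> \<Union>{V \<in> \<B>. V \<subseteq> ?P}"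
      using \<B>(3) W(2) by blast
    moreover have "y \<in> topspace Y"
      using W openin_subset by blast
    ultimately have "\<exists>\<F>. finite \<F> \<and> \<F> \<subseteq> {V \<in> \<B>. V \<subseteq> ?P} \<and> {x \<in> topspace X. f x = y} \<subseteq> \<Union>\<F>"
      using fibres \<B>(2) unfolding compactin_def by (metis (no_types, lifting) mem_Collect_eq)
    then obtain \<F> where \<F>: "finite \<F>" "\<F> \<subseteq> \<B>" "\<Union>\<F> \<subseteq> ?P" "{x \<in> topspace X. f x = y} \<subseteq> \<Union>\<F>"
      by blast
    have "y \<in> w (\<Union>\<F>)"
      using \<F>(4) \<open>y \<in> topspace Y\<close> unfolding w_def by blast
    moreover have "w (\<Union>\<F>) \<subseteq> W"
    proof
      fix z assume z: "z \<in> w (\<Union>\<F>)"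
      then obtain x where "x \<in> topspace X" "f x = z"
        using f(3) unfolding w_def by (metis DiffD1 imageE)
      then have "x \<in> \<Union>\<F>"
        using z unfolding w_def by blast
      then show "z \<in> W"
        using \<F>(3) \<open>f x = z\<close> by blast
    qed
    ultimately show ?thesis
      using \<F>(1,2) by blast
  qed
  ultimately show ?thesis
    unfolding second_countable_def by blast
qed

lemma compact_space_countable_separating_imp_metrizable:
  assumes "compact_space X" "countable I"
    and "\<And>i. i \<in> I \<Longrightarrow> continuous_map X euclideanreal (g i)"
    and "\<And>x y. x \<in> topspace X \<Longrightarrow> y \<in> topspace X \<Longrightarrow> x \<noteq> y \<Longrightarrow> \<exists>i\<in>I. g i x \<noteq> g i y"
  shows "metrizable_space X"
proof -
  let ?P = "product_topology (\<lambda>_. euclideanreal) I"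
  define e where "e x = (\<lambda>i\<in>I. g i x)" for x
  have "continuous_map X ?P e"
    unfolding continuous_map_componentwise e_def using assms(3) by auto
  moreover have "inj_on e (topspace X)"
    using assms(4) unfolding e_def inj_on_def by (metis restrict_apply')
  moreover have "Hausdorff_space ?P"
    by (simp add: Hausdorff_space_product_topology)
  ultimately have "embedding_map X ?P e"
    using assms(1) continuous_imp_embedding_map by blast
  moreover have "metrizable_space ?P"
    using assms(2) by (simp add: metrizable_space_product_topology metrizable_space_euclidean)
  ultimately show ?thesis
    using metrizable_space_subtopology homeomorphic_metrizable_space embedding_map_imp_homeomorphic_space
    by blast
qed

lemma regular_space_base_closure_of_subset:
  assumes "regular_space X" "\<And>V. V \<in> \<B> \<Longrightarrow> openin X V"
    and base: "\<And>U x. openin X U \<Longrightarrow> x \<in> U \<Longrightarrow> \<exists>V\<in>\<B>. x \<in> V \<and> V \<subseteq> U"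
    and "openin X W" "x \<in> W"
  obtains B B' where "B \<in> \<B>" "B' \<in> \<B>" "x \<in> B" "X closure_of B \<subseteq> B'" "B' \<subseteq> W"
proof -
  obtain B' where B': "B' \<in> \<B>" "x \<in> B'" "B' \<subseteq> W"
    using base assms(4,5) by blast
  obtain U where U: "openin X U" "x \<in> U" "X closure_of U \<subseteq> B'"
    using regular_space_closure_of_subset[OF assms(1) assms(2)[OF B'(1)] B'(2)] by blast
  obtain B where B: "B \<in> \<B>" "x \<in> B" "B \<subseteq> U"
    using base[OF U(1,2)] by blast
  have "X closure_of B \<subseteq> B'"
    using closure_of_mono[OF B(3)] U(3) by blast
  then show ?thesis
    using that B(1,2) B'(1,3) by blast
qed

lemma compact_Hausdorff_second_countable_imp_metrizable:
  assumes "compact_space X" "Hausdorff_space X" "second_countable X"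
  shows "metrizable_space X"
proof -
  obtain \<B> where \<B>: "countable \<B>" "\<And>V. V \<in> \<B> \<Longrightarrow> openin X V"
    "\<And>U x. openin X U \<Longrightarrow> x \<in> U \<Longrightarrow> \<exists>V\<in>\<B>. x \<in> V \<and> V \<subseteq> U"
    using assms(3) unfolding second_countable_def by metis
  have reg: "regular_space X" and "normal_space X"
    using assms(1,2) compact_Hausdorff_imp_regular_space compact_Hausdorff_or_regular_imp_normal_space
    by blast+
  define I where "I = {(B, B'). B \<in> \<B> \<and> B' \<in> \<B> \<and> X closure_of B \<subseteq> B'}"
  have "I \<subseteq> \<B> \<times> \<B>"
    unfolding I_def by blast
  then have "countable I"
    by (rule countable_subset) (simp add: \<B>(1))
  have "\<forall>p\<in>I. \<exists>g. continuous_map X euclideanreal g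
            \<and> g ` (X closure_of fst p) \<subseteq> {0} \<and> g ` (topspace X - snd p) \<subseteq> {1}"
  proof
    fix p assume "p \<in> I"
    then have "snd p \<in> \<B>" "X closure_of fst p \<subseteq> snd p"
      unfolding I_def by auto
    then have "closedin X (topspace X - snd p)" "disjnt (X closure_of fst p) (topspace X - snd p)"
      using \<B>(2) by (auto simp: closedin_diff disjnt_def)
    then show "\<exists>g. continuous_map X euclideanreal g
            \<and> g ` (X closure_of fst p) \<subseteq> {0} \<and> g ` (topspace X - snd p) \<subseteq> {1}"
      using Urysohn_lemma_alt[OF \<open>normal_space X\<close> closedin_closure_of] by metis
  qed
  then obtain g where g: "\<And>p. p \<in> I \<Longrightarrow> continuous_map X euclideanreal (g p)"
    "\<And>p. p \<in> I \<Longrightarrow> g p ` (X closure_of fst p) \<subseteq> {0}"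
    "\<And>p. p \<in> I \<Longrightarrow> g p ` (topspace X - snd p) \<subseteq> {1}"
    by metis
  have "\<exists>p\<in>I. g p x \<noteq> g p y" if xy: "x \<in> topspace X" "y \<in> topspace X" "x \<noteq> y" for x y
  proof -
    have W: "openin X (topspace X - {y})" "x \<in> topspace X - {y}"
      using closedin_Hausdorff_singleton[OF assms(2) xy(2)] xy by (auto simp: closedin_def)
    obtain B B' where B: "B \<in> \<B>" "B' \<in> \<B>" "x \<in> B" "X closure_of B \<subseteq> B'"
      "B' \<subseteq> topspace X - {y}"
      using regular_space_base_closure_of_subset[OF reg \<B>(2,3) W] by blast
    then have I: "(B, B') \<in> I"
      by (simp add: I_def)
    have "x \<in> X closure_of B"
      using B(3) xy(1) closure_of_subset_Int[of X B] by blast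
    then have "g (B, B') x = 0"
      using g(2)[OF I] by (auto simp: image_subset_iff)
    moreover have "g (B, B') y = 1"
      using g(3)[OF I] B(5) xy(2) by (auto simp: image_subset_iff)
    ultimately show ?thesis
      using I by (metis zero_neq_one)
  qed
  then show ?thesis
    using compact_space_countable_separating_imp_metrizable[OF assms(1) \<open>countable I\<close>, where g = g] g(1)
    by blast
qed

lemma ccc_cont_image_metrizable_of_fragmentable:
  fixes K :: "'a topology" and Y :: "'b topology"
  assumes "compact_space K" "Hausdorff_space K" "aleph0_monolithic K" "fragmentable K"
    and "cont_image K Y" "ccc_space Y"
  shows "metrizable_space Y"
proof -
  obtain f where f: "continuous_map K Y f" "f ` topspace K = topspace Y" and "Hausdorff_space Y"
    using assms(5) unfolding cont_image_def by blast
  have "proper_map K Y f"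
    using continuous_imp_proper_map[OF assms(1) Hausdorff_imp_kc_space f(1)] \<open>Hausdorff_space Y\<close> .
  then have fibres: "\<And>y. y \<in> topspace Y \<Longrightarrow> compactin K {x \<in> topspace K. f x = y}"
    unfolding proper_map_def by blast
  obtain L where "closedin K L" and irr: "irreducible_map (subtopology K L) Y f"
    using irreducible_restriction_exists[OF f(2) fibres] by metis
  let ?L = "subtopology K L"
  have L: "compact_space ?L" "Hausdorff_space ?L" "continuous_map ?L Y f"
    using compact_space_subtopology[OF closedin_compact_space[OF assms(1) \<open>closedin K L\<close>]]
      Hausdorff_space_subtopology[OF assms(2)] continuous_map_from_subtopology[OF f(1)] .
  have surj: "f ` topspace ?L = topspace Y"
    using irr unfolding irreducible_map_def by blast
  have "ccc_space ?L"
    using ccc_space_irreducible_preimage[OF continuous_imp_closed_map[OF L(3,1) \<open>Hausdorff_space Y\<close>] irr assms(6)] .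
  then have "separable_space ?L"
    using fragmentable_ccc_imp_separable_space[OF L(1,2)] fragmentable_subtopology[OF assms(4)] by blast
  then have "metrizable_space ?L"
    using assms(3) closedin_subset[OF \<open>closedin K L\<close>] unfolding aleph0_monolithic_def by blast
  then have "second_countable ?L"
    by (rule compact_metrizable_imp_second_countable[OF L(1)])
  moreover have "perfect_map ?L Y f"
    unfolding perfect_map_def
    using L(3) continuous_imp_proper_map[OF L(1) Hausdorff_imp_kc_space[OF \<open>Hausdorff_space Y\<close>] L(3)] surj
    by blast
  ultimately have "second_countable Y"
    using second_countable_perfect_map_image by blast
  moreover have "compact_space Y"
    using image_compactin[of ?L "topspace ?L" Y f] L(1,3) surj by (simp add: compact_space_def)
  ultimately show ?thesis
    using compact_Hausdorff_second_countable_imp_metrizable \<open>Hausdorff_space Y\<close> by blast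
qed

theorem proposition3p11:
  shows "(\<forall>K :: 'a topology.
            compact_Hausdorff K
          \<and> (\<forall>Y :: 'a set topology. cont_image K Y \<and> separable_space Y \<longrightarrow> metrizable_space Y)
          \<and> (\<forall>Y :: 'a set topology. cont_image K Y \<longrightarrow>
                (\<exists>D. D \<subseteq> topspace Y \<and> Y closure_of D = topspace Y
                     \<and> metrizable_space (subtopology Y D)))
          \<longrightarrow> (\<forall>Y :: 'b topology. cont_image K Y \<and> ccc_space Y \<longrightarrow> metrizable_space Y))
       \<and> (\<forall>K :: 'a topology.
            compact_Hausdorff K \<and> aleph0_monolithic K \<and> fragmentable K
          \<longrightarrow> (\<forall>Y :: 'b topology. cont_image K Y \<and> ccc_space Y \<longrightarrow> metrizable_space Y))"
proof (intro conjI allI impI; elim conjE)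
  fix K :: "'a topology" and Y :: "'b topology"
  assume "\<forall>Y :: 'a set topology. cont_image K Y \<and> separable_space Y \<longrightarrow> metrizable_space Y"
    and "\<forall>Y :: 'a set topology. cont_image K Y \<longrightarrow>
           (\<exists>D. D \<subseteq> topspace Y \<and> Y closure_of D = topspace Y \<and> metrizable_space (subtopology Y D))"
    and "cont_image K Y" "ccc_space Y"
  then show "metrizable_space Y"
    using ccc_cont_image_metrizable_of_dense_metrizable[of K Y] by blast
next
  fix K :: "'a topology" and Y :: "'b topology"
  assume "compact_Hausdorff K" "aleph0_monolithic K" "fragmentable K" "cont_image K Y" "ccc_space Y"
  then show "metrizable_space Y"
    using ccc_cont_image_metrizable_of_fragmentable unfolding compact_Hausdorff_def by blast
qed

end
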